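(* Let $\Sigma=(I,X,\mathcal U,\phi,Y,h)$ be a forward complete control system with outputs which is OOULIM. Then the time bound in OOULIM can be chosen independently of $s$: there exists $\gamma\in\mathcal K_\infty$ such that for all $\varepsilon,r>0$ there is $\tau=\tau(\varepsilon,r)\in I$ such that for all $x\in X$ and all $u\in\mathcal U$ with $\|y(0,x,u)\|_Y<r$ there exists $t\in I$, $t\le\tau$, with $\|y(t,x,u)\|_Y\le\varepsilon+\gamma(\|u\|_{\mathcal U})$.
   Context: Let $I\in\{\mathbb N_0,\mathbb R_0^+\}$. A forward complete control system with outputs $\Sigma=(I,X,\mathcal U,\phi,Y,h)$ consists of: a normed space $(X,\|\cdot\|_X)$; a vector space $U$ and a normed linear subspace $(\mathcal U,\|\cdot\|_{\mathcal U})$ of $\{u:I\to U\}$ such that for all $u\in\mathcal U,\tau\in I$, $u(\cdot+\tau)\in\mathcal U$ with $\|u(\cdot+\tau)\|_{\mathcal U}\le\|u\|_{\mathcal U}$, and for $t_2\ge t_1\ge 0$ the function $u|_{[t_1,t_2]}$ ($u$ on $[t_1,t_2]$, $0$ elsewhere) lies in $\mathcal U$ with norm $\le\|u\|_{\mathcal U}$; a map $\phi:I\times X\times\mathcal U\to X$ with $\phi(0,x,u)=x$, causality, and cocycle property $\phi(t+s,x,u)=\phi(s,\phi(t,x,u),u(t+\cdot))$; a normed space $Y$ and $h:X\times U\to Y$. Write $y(t,x,u)=h(\phi(t,x,u),u(t))$, $B_{s,\mathcal U}=\{u:\|u\|_{\mathcal U}<s\}$, $B_{r,Y}=\{y\in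 Y:\|y\|_Y<r\}$; $\mathcal K_\infty$ = unbounded continuous strictly increasing functions $\mathbb R_0^+\to\mathbb R_0^+$ vanishing at $0$. OOULIM: $\exists\gamma\in\mathcal K_\infty$ such that for all $\varepsilon,r,s>0$ there is $\tau=\tau(\varepsilon,r,s)\in I$ such that for all $x\in X$ and $u\in B_{s,\mathcal U}$ with $y(0,x,u)\in B_{r,Y}$ there exists $t\in I$, $t\le\tau$, with $\|y(t,x,u)\|_Y\le\varepsilon+\gamma(\|u\|_{\mathcal U})$. *)

theory Defs
  imports "HOL-Analysis.Analysis"
begin

definition time_set :: "real set \<Rightarrow> bool" where
  "time_set T \<longleftrightarrow> T = range real \<or> T = {0..}"

definition Kinf :: "(real \<Rightarrow> real) \<Rightarrow> bool" where
  "Kinf g \<longleftrightarrow> continuous_on {0..} g \<and> strict_mono_on {0..} g \<and> g 0 = 0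
     \<and> (\<forall>x\<ge>0. g x \<ge> 0) \<and> (\<forall>M. \<exists>x\<ge>0. g x > M)"

text \<open>Input functions u : T -> U are represented as total functions on the reals
  that vanish outside T.\<close>
definition shift_in :: "real set \<Rightarrow> (real \<Rightarrow> 'u::real_vector) \<Rightarrow> real \<Rightarrow> (real \<Rightarrow> 'u)" where
  "shift_in T u \<tau> = (\<lambda>t. if t \<in> T then u (t + \<tau>) else 0)"

definition restr_in :: "real set \<Rightarrow> (real \<Rightarrow> 'u::real_vector) \<Rightarrow> real \<Rightarrow> real \<Rightarrow> (real \<Rightarrow> 'u)" where
  "restr_in T u t1 t2 = (\<lambda>t. if t \<in> T \<and> t1 \<le> t \<and> t \<le> t2 then u t else 0)"

text \<open>Forward complete control system with outputs (T, X, Uc, phi, Y, h);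
  X, Y are the types 'x, 'y; U is the type 'u; Uc with norm nU is the input space.\<close>
definition control_system ::
  "real set \<Rightarrow> (real \<Rightarrow> 'u::real_vector) set \<Rightarrow> ((real \<Rightarrow> 'u) \<Rightarrow> real)
   \<Rightarrow> (real \<Rightarrow> 'x::real_normed_vector \<Rightarrow> (real \<Rightarrow> 'u) \<Rightarrow> 'x)
   \<Rightarrow> ('x \<Rightarrow> 'u \<Rightarrow> 'y::real_normed_vector) \<Rightarrow> bool" where
  "control_system T Uc nU \<phi> h \<longleftrightarrow>
     time_set T \<and>
     \<comment> \<open>Uc is a linear subspace of functions T -> U\<close>
     (\<forall>u\<in>Uc. \<forall>t. t \<notin> T \<longrightarrow> u t = 0) \<and>
     (\<lambda>t. 0) \<in> Uc \<and> (\<forall>u\<in>Uc. \<forall>v\<in>Uc. (\<lambda>t. u t + v t) \<in> Uc) \<and> (\<forall>c::real. \<forall>u\<in>Uc. (\<lambda>t. c *\<^sub>R u t) \<in> Uc) \<and>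
     \<comment> \<open>nU is a norm on Uc\<close>
     (\<forall>u\<in>Uc. nU u \<ge> 0) \<and> (\<forall>u\<in>Uc. nU u = 0 \<longleftrightarrow> u = (\<lambda>t. 0)) \<and>
     (\<forall>c::real. \<forall>u\<in>Uc. nU (\<lambda>t. c *\<^sub>R u t) = \<bar>c\<bar> * nU u) \<and>
     (\<forall>u\<in>Uc. \<forall>v\<in>Uc. nU (\<lambda>t. u t + v t) \<le> nU u + nU v) \<and>
     \<comment> \<open>shift and restriction axioms\<close>
     (\<forall>u\<in>Uc. \<forall>\<tau>\<in>T. shift_in T u \<tau> \<in> Uc \<and> nU (shift_in T u \<tau>) \<le> nU u) \<and>
     (\<forall>u\<in>Uc. \<forall>t1\<in>T. \<forall>t2\<in>T. t1 \<le> t2 \<longrightarrow>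
        restr_in T u t1 t2 \<in> Uc \<and> nU (restr_in T u t1 t2) \<le> nU u) \<and>
     \<comment> \<open>identity property\<close>
     (\<forall>x. \<forall>u\<in>Uc. \<phi> 0 x u = x) \<and>
     \<comment> \<open>causality\<close>
     (\<forall>t\<in>T. \<forall>x. \<forall>u\<in>Uc. \<forall>v\<in>Uc. (\<forall>s\<in>T. s \<le> t \<longrightarrow> u s = v s) \<longrightarrow> \<phi> t x u = \<phi> t x v) \<and>
     \<comment> \<open>cocycle property\<close>
     (\<forall>t\<in>T. \<forall>s\<in>T. \<forall>x. \<forall>u\<in>Uc. \<phi> (t + s) x u = \<phi> s (\<phi> t x u) (shift_in T u t))"

definition outp :: "(real \<Rightarrow> 'x \<Rightarrow> (real \<Rightarrow> 'u) \<Rightarrow> 'x) \<Rightarrow> ('x \<Rightarrow> 'u \<Rightarrow> 'y)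
    \<Rightarrow> real \<Rightarrow> 'x \<Rightarrow> (real \<Rightarrow> 'u) \<Rightarrow> 'y" where
  "outp \<phi> h t x u = h (\<phi> t x u) (u t)"

definition OOULIM :: "real set \<Rightarrow> (real \<Rightarrow> 'u::real_vector) set \<Rightarrow> ((real \<Rightarrow> 'u) \<Rightarrow> real)
   \<Rightarrow> (real \<Rightarrow> 'x \<Rightarrow> (real \<Rightarrow> 'u) \<Rightarrow> 'x) \<Rightarrow> ('x \<Rightarrow> 'u \<Rightarrow> 'y::real_normed_vector) \<Rightarrow> bool" where
  "OOULIM T Uc nU \<phi> h \<longleftrightarrow>
    (\<exists>\<gamma>. Kinf \<gamma> \<and> (\<forall>\<epsilon>>0. \<forall>r>0. \<forall>s>0. \<exists>\<tau>\<in>T. \<forall>x. \<forall>u\<in>Uc.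
        nU u < s \<and> norm (outp \<phi> h 0 x u) < r \<longrightarrow>
        (\<exists>t\<in>T. t \<le> \<tau> \<and> norm (outp \<phi> h t x u) \<le> \<epsilon> + \<gamma> (nU u))))"

end

theory Submission
  imports Defs
begin

text \<open>Pick \<open>s > 0\<close> with \<open>\<gamma> s > r\<close>. Inputs with \<open>\<parallel>u\<parallel> < s\<close> are handled by the OOULIM time
  \<open>\<tau>(\<epsilon>, r, s)\<close>. For the remaining inputs nothing has to happen: already at time 0 the
  output satisfies \<open>\<parallel>y(0)\<parallel> < r < \<gamma> s \<le> \<gamma> \<parallel>u\<parallel>\<close>. So \<open>\<tau>(\<epsilon>, r) := \<tau>(\<epsilon>, r, s)\<close> works.\<close>

lemma time_set_zero: "time_set T \<Longrightarrow> 0 \<in> T"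
  unfolding time_set_def by auto

lemma time_set_nonneg: "time_set T \<Longrightarrow> t \<in> T \<Longrightarrow> 0 \<le> t"
  unfolding time_set_def by auto

lemma Kinf_mono: "Kinf \<gamma> \<Longrightarrow> 0 \<le> a \<Longrightarrow> a \<le> b \<Longrightarrow> \<gamma> a \<le> \<gamma> b"
  unfolding Kinf_def by (auto intro: strict_mono_on_leD)

lemma Kinf_exceeds:
  assumes "Kinf \<gamma>" and "0 \<le> r"
  obtains s where "0 < s" and "r < \<gamma> s"
proof -
  obtain s where "0 \<le> s" and "r < \<gamma> s"
    using assms(1) unfolding Kinf_def by blast
  moreover have "s \<noteq> 0"
    using \<open>r < \<gamma> s\<close> assms unfolding Kinf_def by auto
  ultimately show thesis
    using that by (simp add: order.strict_iff_order)
qed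

theorem lemma10:
  fixes T :: "real set" and Uc :: "(real \<Rightarrow> 'u::real_vector) set"
    and nU :: "(real \<Rightarrow> 'u) \<Rightarrow> real"
    and \<phi> :: "real \<Rightarrow> 'x::real_normed_vector \<Rightarrow> (real \<Rightarrow> 'u) \<Rightarrow> 'x"
    and h :: "'x \<Rightarrow> 'u \<Rightarrow> 'y::real_normed_vector"
  assumes "control_system T Uc nU \<phi> h"
    and "OOULIM T Uc nU \<phi> h"
  shows "\<exists>\<gamma>. Kinf \<gamma> \<and> (\<forall>\<epsilon>>0. \<forall>r>0. \<exists>\<tau>\<in>T. \<forall>x. \<forall>u\<in>Uc.
           norm (outp \<phi> h 0 x u) < r \<longrightarrow>
           (\<exists>t\<in>T. t \<le> \<tau> \<and> norm (outp \<phi> h t x u) \<le> \<epsilon> + \<gamma> (nU u)))"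
proof -
  have T: "time_set T"
    using assms(1) unfolding control_system_def by blast
  obtain \<gamma> where K: "Kinf \<gamma>" and ooulim: "\<forall>\<epsilon>>0. \<forall>r>0. \<forall>s>0. \<exists>\<tau>\<in>T. \<forall>x. \<forall>u\<in>Uc.
        nU u < s \<and> norm (outp \<phi> h 0 x u) < r \<longrightarrow>
        (\<exists>t\<in>T. t \<le> \<tau> \<and> norm (outp \<phi> h t x u) \<le> \<epsilon> + \<gamma> (nU u))"
    using assms(2) unfolding OOULIM_def by blast
  have "\<exists>\<tau>\<in>T. \<forall>x. \<forall>u\<in>Uc. norm (outp \<phi> h 0 x u) < r \<longrightarrow>
          (\<exists>t\<in>T. t \<le> \<tau> \<and> norm (outp \<phi> h t x u) \<le> \<epsilon> + \<gamma> (nU u))"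
    if "\<epsilon> > 0" and "r > 0" for \<epsilon> r
  proof -
    obtain s where "0 < s" and "r < \<gamma> s"
      using Kinf_exceeds[OF K, of r] \<open>r > 0\<close> by auto
    then obtain \<tau> where "\<tau> \<in> T" and small_inputs: "\<forall>x. \<forall>u\<in>Uc.
        nU u < s \<and> norm (outp \<phi> h 0 x u) < r \<longrightarrow>
        (\<exists>t\<in>T. t \<le> \<tau> \<and> norm (outp \<phi> h t x u) \<le> \<epsilon> + \<gamma> (nU u))"
      using ooulim \<open>\<epsilon> > 0\<close> \<open>r > 0\<close> by blast
    have large_inputs: "norm (outp \<phi> h 0 x u) \<le> \<epsilon> + \<gamma> (nU u)"
      if "s \<le> nU u" and "norm (outp \<phi> h 0 x u) < r" for x u
      using Kinf_mono[OF K _ that(1)] \<open>0 < s\<close> \<open>r < \<gamma> s\<close> \<open>\<epsilon> > 0\<close> that(2) by fastforce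
    show ?thesis
      using small_inputs large_inputs \<open>\<tau> \<in> T\<close> time_set_zero[OF T] time_set_nonneg[OF T]
      by (meson not_less)
  qed
  with K show ?thesis
    by blast
qed

end
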